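(* Let $n=p_1p_2\cdots p_r$, where $p_1,\ldots,p_r$ are distinct primes, and let $a,b$ be two distinct proper divisors of $n$ (i.e. divisors not in $\{1,n\}$) such that $a/b=p_k/p_l$ for some $k,l\in\{1,\ldots,r\}$. If $a<b$, then $\deg(a)>\deg(b)$ in $\mathcal{P}(C_n)$.
   Context: For a finite group $G$, the power graph $\mathcal{P}(G)$ is the simple undirected graph with vertex set $G$ in which two distinct vertices are adjacent if one is an integral power of the other. $C_n$ denotes the cyclic group of order $n$, identified with $\mathbb{Z}_n=\{0,1,\ldots,n-1\}$, so a divisor $d<n$ of $n$ is regarded as the element $d\in\mathbb{Z}_n$. $\deg(a)$ is the degree of vertex $a$ in $\mathcal{P}(C_n)$. *)

theory Defs
  imports Complex_Main "HOL-Computational_Algebra.Primes"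
begin

text \<open>Power graph of the cyclic group C_n, identified with Z_n = {0,...,n-1} (additive).\<close>
definition cyc_pow_adj :: "nat \<Rightarrow> nat \<Rightarrow> nat \<Rightarrow> bool" where
  "cyc_pow_adj n x y \<longleftrightarrow> x < n \<and> y < n \<and> x \<noteq> y \<and>
     ((\<exists>k::int. int y = (k * int x) mod int n) \<or> (\<exists>k::int. int x = (k * int y) mod int n))"

definition cyc_pow_deg :: "nat \<Rightarrow> nat \<Rightarrow> nat" where
  "cyc_pow_deg n a = card {x. cyc_pow_adj n a x}"

end

theory Submission
  imports Defs "HOL-Number_Theory.Cong"
begin

text \<open>In \<open>C\<^sub>n\<close> the element \<open>x\<close> generates the subgroup of index \<open>gcd x n\<close>, so two
  vertices are adjacent iff their gcds with \<open>n\<close> are comparable under divisibility.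
  Write \<open>n = k l M\<close> with \<open>a = k c\<close>, \<open>b = l c\<close>, \<open>k < l\<close> and \<open>c\<close> dividing \<open>M\<close>.
  A vertex \<open>y\<close> with \<open>k dvd y \<longleftrightarrow> l dvd y\<close> is adjacent to \<open>a\<close> iff it is adjacent to \<open>b\<close>.
  The other neighbours of \<open>a\<close> are multiples of \<open>k\<close> but not of \<open>l\<close>; by the Chinese remainder
  theorem there are \<open>(l - 1) S\<close> of them, where \<open>S\<close> counts the residues \<open>s\<close> mod \<open>M\<close> with
  \<open>gcd s M\<close> comparable to \<open>c\<close>. For \<open>b\<close> the count is \<open>(k - 1) S\<close>, and \<open>S > 0\<close>.\<close>

definition dvd_comparable :: "nat \<Rightarrow> nat \<Rightarrow> bool" where
  "dvd_comparable x y \<longleftrightarrow> x dvd y \<or> y dvd x"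

(* For a divisor d < n of n, this is the closed neighbourhood of d in the power graph. *)
definition divisor_nbhd :: "nat \<Rightarrow> nat \<Rightarrow> nat set" where
  "divisor_nbhd n d = {y. y < n \<and> dvd_comparable d (gcd y n)}"

lemma ex_mod_multiple_iff_gcd_dvd:
  fixes n x y :: nat
  assumes "y < n"
  shows "(\<exists>k::int. int y = (k * int x) mod int n) \<longleftrightarrow> gcd x n dvd y"
proof
  assume "\<exists>k::int. int y = (k * int x) mod int n"
  then obtain k where "int y = (k * int x) mod int n" by blast
  then have "int y = k * int x - (k * int x div int n) * int n"
    by (simp add: minus_div_mult_eq_mod)
  then have "gcd (int x) (int n) dvd int y"
    by (metis dvd_diff dvd_mult gcd_dvd1 gcd_dvd2)
  then show "gcd x n dvd y"
    by (metis gcd_int_int_eq int_dvd_int_iff)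
next
  assume "gcd x n dvd y"
  then obtain t where t: "y = gcd x n * t" by blast
  obtain u v :: int where uv: "u * int x + v * int n = gcd (int x) (int n)"
    using bezout_int by blast
  have "int y = int t * (u * int x + v * int n)"
    using t uv by simp
  then have "int y = int t * u * int x + (int t * v) * int n"
    by (simp add: algebra_simps)
  then have "int y mod int n = (int t * u * int x) mod int n"
    by simp
  then show "\<exists>k::int. int y = (k * int x) mod int n"
    using assms by auto
qed

lemma cyc_pow_adj_iff_gcd:
  assumes "x < n" "y < n"
  shows "cyc_pow_adj n x y \<longleftrightarrow> x \<noteq> y \<and> dvd_comparable (gcd x n) (gcd y n)"
  using ex_mod_multiple_iff_gcd_dvd[OF assms(2), of x] ex_mod_multiple_iff_gcd_dvd[OF assms(1), of y] assms
  unfolding cyc_pow_adj_def dvd_comparable_def by auto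

lemma cyc_pow_deg_divisor:
  assumes "d dvd n" "d < n"
  shows "cyc_pow_deg n d = card (divisor_nbhd n d) - 1"
proof -
  have gcd_d: "gcd d n = d"
    using assms(1) by (simp add: gcd_nat.absorb1)
  have "{y. cyc_pow_adj n d y} = divisor_nbhd n d - {d}"
    using cyc_pow_adj_iff_gcd[OF assms(2)] gcd_d unfolding cyc_pow_adj_def divisor_nbhd_def by auto
  moreover have "d \<in> divisor_nbhd n d"
    using assms gcd_d by (simp add: divisor_nbhd_def dvd_comparable_def)
  ultimately show ?thesis
    unfolding cyc_pow_deg_def by simp
qed

lemma mod_in_divisor_nbhd:
  assumes "d dvd n" "n \<noteq> 0"
  shows "d mod n \<in> divisor_nbhd n d"
  using assms by (simp add: divisor_nbhd_def dvd_comparable_def gcd_red_nat[of d n, symmetric]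
      gcd.commute gcd_nat.absorb1)

lemma bij_betw_mod_pair:
  fixes m1 m2 :: nat
  assumes "coprime m1 m2"
  shows "bij_betw (\<lambda>x. (x mod m1, x mod m2)) {..<m1 * m2} ({..<m1} \<times> {..<m2})"
proof (cases "m1 = 0 \<or> m2 = 0")
  case True
  then show ?thesis by (auto simp: bij_betw_def)
next
  case False
  then have nonzero: "m1 \<noteq> 0" "m2 \<noteq> 0" by auto
  show ?thesis
  proof (rule bij_betwI')
    fix x y :: nat assume "x \<in> {..<m1 * m2}" "y \<in> {..<m1 * m2}"
    then show "((x mod m1, x mod m2) = (y mod m1, y mod m2)) = (x = y)"
      using coprime_cong_mult_nat[OF _ _ assms, of x y] cong_less_imp_eq_nat[of x "m1 * m2" y]
      by (auto simp: cong_def)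
  next
    fix x assume "x \<in> {..<m1 * m2}"
    then show "(x mod m1, x mod m2) \<in> {..<m1} \<times> {..<m2}"
      using nonzero by simp
  next
    fix p assume "p \<in> {..<m1} \<times> {..<m2}"
    then obtain x where "x < m1 * m2" "[x = fst p] (mod m1)" "[x = snd p] (mod m2)"
      using ex1_implies_ex[OF binary_chinese_remainder_unique_nat[OF assms nonzero]] by blast
    with \<open>p \<in> {..<m1} \<times> {..<m2}\<close> show "\<exists>x\<in>{..<m1 * m2}. p = (x mod m1, x mod m2)"
      by (auto simp: cong_def)
  qed
qed

lemma card_mod_pair_coprime:
  fixes m1 m2 :: nat
  assumes "coprime m1 m2"
  shows "card {x. x < m1 * m2 \<and> A (x mod m1) \<and> B (x mod m2)}
    = card {i. i < m1 \<and> A i} * card {j. j < m2 \<and> B j}"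
proof -
  let ?h = "\<lambda>x. (x mod m1, x mod m2)"
  let ?S = "{x. x < m1 * m2 \<and> A (x mod m1) \<and> B (x mod m2)}"
  let ?T = "{i. i < m1 \<and> A i} \<times> {j. j < m2 \<and> B j}"
  have bij: "bij_betw ?h {..<m1 * m2} ({..<m1} \<times> {..<m2})"
    by (rule bij_betw_mod_pair[OF assms])
  have image: "?h ` ?S = ?T"
  proof
    show "?h ` ?S \<subseteq> ?T"
    proof
      fix p assume "p \<in> ?h ` ?S"
      then obtain x where x: "x \<in> ?S" "p = ?h x" by blast
      then have "?h x \<in> {..<m1} \<times> {..<m2}"
        using bij_betw_apply[OF bij] by simp
      with x show "p \<in> ?T" by simp
    qed
    show "?T \<subseteq> ?h ` ?S"
    proof clarify
      fix i j assume "i < m1" "A i" "j < m2" "B j"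
      then have "(i, j) \<in> ?h ` {..<m1 * m2}"
        using bij_betw_imp_surj_on[OF bij] by simp
      then obtain x where x: "x < m1 * m2" "?h x = (i, j)"
        by blast
      then have "x \<in> ?S"
        using \<open>A i\<close> \<open>B j\<close> by simp
      from this x(2)[symmetric] show "(i, j) \<in> ?h ` ?S"
        by (rule rev_image_eqI)
    qed
  qed
  have "inj_on ?h ?S"
    by (rule inj_on_subset[OF bij_betw_imp_inj_on[OF bij]]) auto
  then have "card ?S = card ?T"
    by (simp flip: image add: card_image)
  also have "\<dots> = card {i. i < m1 \<and> A i} * card {j. j < m2 \<and> B j}"
    by (rule card_cartesian_product)
  finally show ?thesis .
qed

lemma Collect_multiples_eq_image:
  fixes p m :: nat
  assumes "p > 0"
  shows "{y. y < p * m \<and> p dvd y \<and> P y} = (\<lambda>t. p * t) ` {t. t < m \<and> P (p * t)}"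
  using assms by (auto elim!: dvdE)

lemma card_multiples_not_dvd_comparable:
  fixes p q M c :: nat
  assumes "p > 0" "prime q" "\<not> q dvd p" "coprime q M"
  shows "card {y. y < p * q * M \<and> p dvd y \<and> \<not> q dvd y \<and> dvd_comparable (p * c) (gcd y (p * q * M))}
    = (q - 1) * card (divisor_nbhd M c)"
proof -
  let ?T = "{t. t < q * M \<and> t mod q \<noteq> 0 \<and> dvd_comparable c (gcd (t mod M) M)}"
  have gcd_multiple: "gcd (p * t) (p * q * M) = p * gcd (t mod M) M" if "\<not> q dvd t" for t
  proof -
    have "coprime t q"
      using that assms(2) by (simp add: prime_imp_coprime coprime_commute)
    then have "gcd t (q * M) = gcd t M"
      by (rule gcd_mult_right_left_cancel)
    moreover have "gcd t M = gcd (t mod M) M"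
      by (metis gcd_red_nat gcd.commute)
    ultimately show ?thesis
      by (simp add: gcd_mult_distrib_nat[symmetric] mult.assoc)
  qed
  have comparable_cancel: "dvd_comparable (p * x) (p * z) \<longleftrightarrow> dvd_comparable x z" for x z
    using assms(1) by (simp add: dvd_comparable_def)
  have "\<not> q dvd p * t \<and> dvd_comparable (p * c) (gcd (p * t) (p * q * M))
      \<longleftrightarrow> t mod q \<noteq> 0 \<and> dvd_comparable c (gcd (t mod M) M)" for t
  proof (cases "q dvd t")
    case True
    then show ?thesis
      by (simp add: dvd_eq_mod_eq_0[symmetric])
  next
    case False
    then have "\<not> q dvd p * t"
      using assms(2,3) by (simp add: prime_dvd_mult_iff)
    with False show ?thesis
      by (simp add: gcd_multiple comparable_cancel dvd_eq_mod_eq_0[symmetric])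
  qed
  then have "{y. y < p * q * M \<and> p dvd y \<and> \<not> q dvd y \<and> dvd_comparable (p * c) (gcd y (p * q * M))}
      = (\<lambda>t. p * t) ` ?T"
    using Collect_multiples_eq_image[OF assms(1), of "q * M"] by (simp add: mult.assoc)
  moreover have "inj_on (\<lambda>t. p * t) ?T"
    using assms(1) by (simp add: inj_on_def)
  moreover have "card ?T = card {i. i < q \<and> i \<noteq> 0} * card (divisor_nbhd M c)"
    unfolding divisor_nbhd_def by (rule card_mod_pair_coprime[OF assms(4)])
  moreover have "{i. i < q \<and> i \<noteq> 0} = {0<..<q}"
    by auto
  ultimately show ?thesis
    by (simp add: card_image)
qed

lemma card_divisor_nbhd_diff_balanced:
  fixes p q M c :: nat
  assumes "p > 0" "prime q" "\<not> q dvd p * c" "coprime q M"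
  shows "card (divisor_nbhd (p * q * M) (p * c) - {y. p dvd y \<longleftrightarrow> q dvd y})
    = (q - 1) * card (divisor_nbhd M c)"
proof -
  have "\<not> dvd_comparable (p * c) (gcd y (p * q * M))" if "q dvd y" "\<not> p dvd y" for y
    unfolding dvd_comparable_def
    using that assms(3) dvd_trans[of p "p * c" "gcd y (p * q * M)"]
      dvd_trans[of q "gcd y (p * q * M)" "p * c"]
    by auto
  then have "divisor_nbhd (p * q * M) (p * c) - {y. p dvd y \<longleftrightarrow> q dvd y}
      = {y. y < p * q * M \<and> p dvd y \<and> \<not> q dvd y \<and> dvd_comparable (p * c) (gcd y (p * q * M))}"
    unfolding divisor_nbhd_def by auto
  also have "card \<dots> = (q - 1) * card (divisor_nbhd M c)"
    using assms by (intro card_multiples_not_dvd_comparable) auto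
  finally show ?thesis .
qed

lemma dvd_comparable_prime_mult_iff:
  fixes k c g :: nat
  assumes "prime k" "\<not> k dvd c" "k dvd g \<Longrightarrow> \<not> g dvd k * c"
  shows "dvd_comparable (k * c) g \<longleftrightarrow> (if k dvd g then c dvd g else g dvd c)"
proof (cases "k dvd g")
  case True
  have "coprime k c"
    using assms(1,2) by (simp add: prime_imp_coprime)
  then have "k * c dvd g \<longleftrightarrow> c dvd g"
    using True by (meson divides_mult dvd_mult_right)
  then show ?thesis
    using True assms(3) by (simp add: dvd_comparable_def)
next
  case False
  have "coprime g k"
    using prime_imp_coprime[OF assms(1) False] by (simp add: coprime_commute)
  then have "g dvd k * c \<longleftrightarrow> g dvd c"
    by (simp add: coprime_dvd_mult_right_iff)
  moreover have "\<not> k * c dvd g"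
    using False dvd_mult_left by blast
  ultimately show ?thesis
    using False by (simp add: dvd_comparable_def)
qed

lemma dvd_comparable_prime_mult_swap:
  fixes k l c g :: nat
  assumes "prime k" "prime l" "\<not> k dvd l * c" "\<not> l dvd k * c" "k dvd g \<longleftrightarrow> l dvd g"
  shows "dvd_comparable (k * c) g \<longleftrightarrow> dvd_comparable (l * c) g"
proof -
  have "\<not> k dvd c" "\<not> l dvd c"
    using assms(3,4) by auto
  moreover have "k dvd g \<Longrightarrow> \<not> g dvd k * c" "l dvd g \<Longrightarrow> \<not> g dvd l * c"
    using assms(3-5) dvd_trans[of l g "k * c"] dvd_trans[of k g "l * c"] by blast+
  ultimately show ?thesis
    using assms(5) dvd_comparable_prime_mult_iff[OF assms(1), of c g]
      dvd_comparable_prime_mult_iff[OF assms(2), of c g]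
    by simp
qed

lemma divisor_nbhd_inter_balanced_swap:
  fixes k l c n :: nat
  assumes "prime k" "prime l" "\<not> k dvd l * c" "\<not> l dvd k * c" "k dvd n" "l dvd n"
  shows "divisor_nbhd n (k * c) \<inter> {y. k dvd y \<longleftrightarrow> l dvd y}
    = divisor_nbhd n (l * c) \<inter> {y. k dvd y \<longleftrightarrow> l dvd y}"
proof -
  have "k dvd gcd y n \<longleftrightarrow> l dvd gcd y n" if "k dvd y \<longleftrightarrow> l dvd y" for y
    using that assms(5,6) by simp
  then show ?thesis
    using dvd_comparable_prime_mult_swap[OF assms(1-4)] unfolding divisor_nbhd_def by blast
qed

lemma prime_not_dvd_mult_coprime:
  fixes k l c M :: nat
  assumes "prime k" "prime l" "k \<noteq> l" "coprime k M" "c dvd M"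
  shows "\<not> k dvd l * c"
proof
  assume "k dvd l * c"
  then have "k dvd c"
    using assms(1-3) by (auto simp: prime_dvd_mult_iff dest: primes_dvd_imp_eq)
  then have "k dvd M"
    using assms(5) by (rule dvd_trans)
  then have "is_unit k"
    using coprime_common_divisor[OF assms(4) dvd_refl] by simp
  with assms(1) show False
    by (simp add: not_prime_unit)
qed

lemma cyc_pow_deg_prime_multiple_less:
  fixes k l M c :: nat
  assumes k: "prime k" and l: "prime l" and "k < l"
    and "coprime k M" "coprime l M" "c dvd M"
  shows "cyc_pow_deg (k * l * M) (l * c) < cyc_pow_deg (k * l * M) (k * c)"
proof -
  define n where "n = k * l * M"
  define E where "E = {y. k dvd y \<longleftrightarrow> l dvd y}"
  define S where "S = card (divisor_nbhd M c)"
  have "M \<noteq> 0"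
    using \<open>coprime k M\<close> k not_prime_unit by (metis coprime_0_right_iff)
  have k_not_dvd: "\<not> k dvd l * c" and l_not_dvd: "\<not> l dvd k * c"
    using prime_not_dvd_mult_coprime assms by (metis less_irrefl)+
  have common: "divisor_nbhd n (k * c) \<inter> E = divisor_nbhd n (l * c) \<inter> E"
    unfolding E_def using divisor_nbhd_inter_balanced_swap[OF k l k_not_dvd l_not_dvd]
    by (simp add: n_def)
  have card_kc: "card (divisor_nbhd n (k * c) - E) = (l - 1) * S"
    unfolding n_def E_def S_def using card_divisor_nbhd_diff_balanced[OF _ l l_not_dvd \<open>coprime l M\<close>] k
    by (simp add: prime_gt_0_nat)
  have "E = {y. l dvd y \<longleftrightarrow> k dvd y}" "n = l * k * M"
    by (auto simp: E_def n_def)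
  then have card_lc: "card (divisor_nbhd n (l * c) - E) = (k - 1) * S"
    unfolding S_def using card_divisor_nbhd_diff_balanced[OF _ k k_not_dvd \<open>coprime k M\<close>] l
    by (simp add: prime_gt_0_nat)
  have "S > 0"
    unfolding S_def using mod_in_divisor_nbhd[OF \<open>c dvd M\<close> \<open>M \<noteq> 0\<close>]
    by (auto simp: card_gt_0_iff divisor_nbhd_def)
  moreover have "2 \<le> k"
    using k by (simp add: prime_ge_2_nat)
  ultimately have "(k - 1) * S < (l - 1) * S" "(k - 1) * S > 0"
    using \<open>k < l\<close> by simp_all
  have "c \<le> M"
    using \<open>c dvd M\<close> \<open>M \<noteq> 0\<close> by (simp add: dvd_imp_le)
  have deg: "cyc_pow_deg n (p * c) = card (divisor_nbhd n (p * c) \<inter> E) + card (divisor_nbhd n (p * c) - E) - 1"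
    if "p = k \<or> p = l" for p
  proof -
    have "p * c dvd n"
      using that \<open>c dvd M\<close> by (auto simp: n_def mult_dvd_mono)
    moreover have "p * c < n"
      using that \<open>c \<le> M\<close> \<open>M \<noteq> 0\<close> prime_ge_2_nat[OF k] prime_ge_2_nat[OF l]
      by (auto simp: n_def intro: le_less_trans[OF mult_le_mono2])
    moreover have "finite (divisor_nbhd n (p * c))"
      unfolding divisor_nbhd_def by simp
    ultimately show ?thesis
      using cyc_pow_deg_divisor card_Int_Diff by metis
  qed
  have "cyc_pow_deg n (l * c) = card (divisor_nbhd n (l * c) \<inter> E) + (k - 1) * S - 1"
    using deg[of l] card_lc by simp
  also have "\<dots> < card (divisor_nbhd n (l * c) \<inter> E) + (l - 1) * S - 1"
    using \<open>(k - 1) * S < (l - 1) * S\<close> \<open>(k - 1) * S > 0\<close> by linarith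
  also have "\<dots> = cyc_pow_deg n (k * c)"
    using deg[of k] card_kc common by simp
  finally show ?thesis
    unfolding n_def .
qed

lemma cross_mult_eq_primes_obtain:
  fixes a b k l M :: nat
  assumes "prime k" "prime l" "k \<noteq> l" "a * l = b * k" "a dvd k * l * M" "b dvd k * l * M"
  obtains c where "a = k * c" "b = l * c" "c dvd M"
proof -
  have "coprime k l"
    using assms(1-3) by (rule primes_coprime)
  then have "k dvd a"
    using assms(4) by (metis coprime_dvd_mult_left_iff dvd_triv_right)
  then obtain c where a: "a = k * c" ..
  then have b: "b = l * c"
    using assms(1,4) prime_gt_0_nat[OF assms(1)] by (simp add: mult.commute)
  have "c dvd l * M" "c dvd k * M"
    using assms(5,6) prime_gt_0_nat[OF assms(1)] prime_gt_0_nat[OF assms(2)] unfolding a b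
    by (simp_all add: mult.assoc mult.left_commute[of l k])
  then have "c dvd gcd (M * k) (M * l)"
    by (simp add: mult.commute)
  then have "c dvd M"
    using \<open>coprime k l\<close> by (simp add: gcd_mult_distrib_nat[symmetric])
  with a b show thesis ..
qed

lemma prod_primes_remove_two:
  fixes P :: "nat set"
  assumes "finite P" "\<forall>p\<in>P. prime p" "k \<in> P" "l \<in> P" "k \<noteq> l"
  shows "\<Prod>P = k * l * \<Prod>(P - {k, l})"
    and "coprime k (\<Prod>(P - {k, l}))" "coprime l (\<Prod>(P - {k, l}))"
proof -
  have "\<Prod>P = k * \<Prod>(P - {k})"
    using prod.remove[OF assms(1,3), of id] by simp
  also have "\<Prod>(P - {k}) = l * \<Prod>(P - {k} - {l})"
    using prod.remove[of "P - {k}" l id] assms by simp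
  finally show "\<Prod>P = k * l * \<Prod>(P - {k, l})"
    by (simp add: Diff_insert2[symmetric] mult.assoc)
  show "coprime k (\<Prod>(P - {k, l}))" "coprime l (\<Prod>(P - {k, l}))"
    using assms(2-4) by (auto intro!: prod_coprime_right primes_coprime)
qed

theorem lemma2p4:
  fixes P :: "nat set" and n a b :: nat
  assumes "finite P"
    and "\<forall>p\<in>P. prime p"
    and "n = \<Prod>P"
    and "a dvd n" and "a \<notin> {1, n}"
    and "b dvd n" and "b \<notin> {1, n}"
    and "a \<noteq> b"
    and "\<exists>k\<in>P. \<exists>l\<in>P. real a / real b = real k / real l"
    and "a < b"
  shows "cyc_pow_deg n a > cyc_pow_deg n b"
proof -
  obtain k l where kl: "k \<in> P" "l \<in> P" and ratio: "real a / real b = real k / real l"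
    using assms(9) by blast
  have k: "prime k" and l: "prime l"
    using assms(2) kl by auto
  have "n > 0"
    using assms(1-3) by (simp add: prime_gt_0_nat prod_pos)
  then have "b > 0"
    using assms(6) by (auto intro!: gr0I)
  then have cross: "a * l = b * k"
    using ratio prime_gt_0_nat[OF l] by (simp add: field_simps flip: of_nat_mult)
  then have "k \<noteq> l"
    using assms(8) prime_gt_0_nat[OF k] by auto
  have "k < l"
  proof (rule ccontr)
    assume "\<not> k < l"
    have "a * l < b * l"
      using \<open>a < b\<close> prime_gt_0_nat[OF l] by simp
    also have "\<dots> \<le> b * k"
      using \<open>\<not> k < l\<close> by simp
    finally show False
      using cross by simp
  qed
  define M where "M = \<Prod>(P - {k, l})"
  note split = prod_primes_remove_two[OF assms(1,2) kl \<open>k \<noteq> l\<close>, folded M_def]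
  have n: "n = k * l * M"
    using split(1) assms(3) by simp
  obtain c where "a = k * c" "b = l * c" "c dvd M"
    using cross_mult_eq_primes_obtain[OF k l \<open>k \<noteq> l\<close> cross] assms(4,6) n by metis
  then show ?thesis
    using cyc_pow_deg_prime_multiple_less[OF k l \<open>k < l\<close> split(2,3)] n by simp
qed

end
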